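(* Let $C=c_0c_1\dots c_{m-1}c_0$ and $D=(0)(1)\dots(n-1)(0)$ be reflexive digraph cycles with $D$ non-contractible, and let $i \in \{1,\dots,n\}$ (a vertex of $D$, with $n \equiv 0$). The graph $\mathrm{Mon}_1(C,D;i)$ is connected. Moreover, if it is nonempty, there are elements $\Phi_i^m$ and $\Phi_i^M$ of $\mathrm{Mon}_1(C,D;i)$ such that for every element $\phi$ of $\mathrm{Mon}_1(C,D;i)$ there is a sequence of monotone one-step up edges, through elements of $\mathrm{Mon}_1(C,D;i)$, from $\Phi_i^m$ to $\phi$, and one from $\phi$ to $\Phi_i^M$.
   Context: A digraph is a binary relation $\to$ on a finite vertex set; reflexive means every vertex has a loop. A digraph cycle $C=c_0c_1\dots c_{m-1}c_0$ (indices mod $m$, $m\ge 3$) has underlying graph the cycle with edges $c_ic_{i+1}$; $D=(0)(1)\dots(n-1)(0)$ has vertex set the integers mod $n$. $D$ is non-contractible if it has length at least $4$ or is a directed $3$-cycle. A homomorphism $\phi:C\to D$ satisfies $u\to v\Rightarrow\phi(u)\to\phi(v)$. $\mathrm{Hom}(C,D)$ is the digraph on homomorphisms with $\phi\to\phi'$ iff $\phi(u)\to\phi'(v)$ for all arcs $u\to v$ of $C$; connectivity refers to its underlying graph. Under $\phi$, edge $c_ic_{i+1}$ is increasing, stationary or decreasing as $\phi(c_{i+1})-\phi(c_i)$ is $1,0,-1$ (mod $n$); the wind of $\phi$ is (number of increasing minus number of decreasing edges)$/n$. $\mathrm{Mon}_1(C,D;i)$ is the subgraph of $\mathrm{Hom}(C,D)$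 induced by the homomorphisms $\phi$ of wind $1$ in which every edge is increasing or stationary and with $\phi(c_0)=i$. A monotone one-step up edge is a pair $(\phi,\phi')$ of such monotone wind-$1$ homomorphisms where, for some subpath of $C$ with vertex set $S$ all of whose edges are stationary under $\phi$ (so $\phi(S)=\{d\}$), $\phi'$ agrees with $\phi$ off $S$ and maps $S$ to $d+1$ (such $\phi,\phi'$ are adjacent in $\mathrm{Hom}(C,D)$). *)

theory Defs
  imports Main "HOL-Library.FuncSet" Complex_Main
begin

text \<open>A reflexive digraph cycle c_0 c_1 ... c_{m-1} c_0 is modelled on the vertex set
  {0..<m} (vertex c_j is j) by its arc relation A.\<close>

definition refl_cycle :: "nat \<Rightarrow> (nat \<Rightarrow> nat \<Rightarrow> bool) \<Rightarrow> bool" where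
  "refl_cycle m A \<longleftrightarrow> m \<ge> 3
     \<and> (\<forall>u v. A u v \<longrightarrow> u < m \<and> v < m)
     \<and> (\<forall>u<m. A u u)
     \<and> (\<forall>u v. A u v \<longrightarrow> u = v \<or> v = Suc u mod m \<or> u = Suc v mod m)
     \<and> (\<forall>u<m. A u (Suc u mod m) \<or> A (Suc u mod m) u)"

definition non_contractible :: "nat \<Rightarrow> (nat \<Rightarrow> nat \<Rightarrow> bool) \<Rightarrow> bool" where
  "non_contractible n B \<longleftrightarrow> n \<ge> 4 \<or>
     (n = 3 \<and> ((\<forall>u<n. \<not> B (Suc u mod n) u) \<or> (\<forall>u<n. \<not> B u (Suc u mod n))))"

definition is_hom :: "nat \<Rightarrow> (nat \<Rightarrow> nat \<Rightarrow> bool) \<Rightarrow> nat \<Rightarrow> (nat \<Rightarrow> nat \<Rightarrow> bool) \<Rightarrow> (nat \<Rightarrow> nat) \<Rightarrow> bool" where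
  "is_hom m A n B \<phi> \<longleftrightarrow> \<phi> \<in> {..<m} \<rightarrow>\<^sub>E {..<n} \<and> (\<forall>u v. A u v \<longrightarrow> B (\<phi> u) (\<phi> v))"

definition hom_arc :: "(nat \<Rightarrow> nat \<Rightarrow> bool) \<Rightarrow> (nat \<Rightarrow> nat \<Rightarrow> bool) \<Rightarrow> (nat \<Rightarrow> nat) \<Rightarrow> (nat \<Rightarrow> nat) \<Rightarrow> bool" where
  "hom_arc A B \<phi> \<psi> \<longleftrightarrow> (\<forall>u v. A u v \<longrightarrow> B (\<phi> u) (\<psi> v))"

definition edge_diff :: "nat \<Rightarrow> nat \<Rightarrow> (nat \<Rightarrow> nat) \<Rightarrow> nat \<Rightarrow> nat" where
  "edge_diff m n \<phi> j = (\<phi> (Suc j mod m) + n - \<phi> j) mod n"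

definition increasing :: "nat \<Rightarrow> nat \<Rightarrow> (nat \<Rightarrow> nat) \<Rightarrow> nat \<Rightarrow> bool" where
  "increasing m n \<phi> j \<longleftrightarrow> edge_diff m n \<phi> j = 1 mod n"

definition stationary :: "nat \<Rightarrow> nat \<Rightarrow> (nat \<Rightarrow> nat) \<Rightarrow> nat \<Rightarrow> bool" where
  "stationary m n \<phi> j \<longleftrightarrow> edge_diff m n \<phi> j = 0"

definition decreasing :: "nat \<Rightarrow> nat \<Rightarrow> (nat \<Rightarrow> nat) \<Rightarrow> nat \<Rightarrow> bool" where
  "decreasing m n \<phi> j \<longleftrightarrow> edge_diff m n \<phi> j = (n - 1) mod n"

definition wind :: "nat \<Rightarrow> nat \<Rightarrow> (nat \<Rightarrow> nat) \<Rightarrow> real" where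
  "wind m n \<phi> = (real (card {j. j < m \<and> increasing m n \<phi> j})
                  - real (card {j. j < m \<and> decreasing m n \<phi> j})) / real n"

definition mono_wind1 :: "nat \<Rightarrow> (nat \<Rightarrow> nat \<Rightarrow> bool) \<Rightarrow> nat \<Rightarrow> (nat \<Rightarrow> nat \<Rightarrow> bool) \<Rightarrow> (nat \<Rightarrow> nat) \<Rightarrow> bool" where
  "mono_wind1 m A n B \<phi> \<longleftrightarrow> is_hom m A n B \<phi> \<and> wind m n \<phi> = 1
     \<and> (\<forall>j<m. increasing m n \<phi> j \<or> stationary m n \<phi> j)"

definition Mon1 :: "nat \<Rightarrow> (nat \<Rightarrow> nat \<Rightarrow> bool) \<Rightarrow> nat \<Rightarrow> (nat \<Rightarrow> nat \<Rightarrow> bool) \<Rightarrow> nat \<Rightarrow> (nat \<Rightarrow> nat) set" where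
  "Mon1 m A n B i = {\<phi>. mono_wind1 m A n B \<phi> \<and> \<phi> 0 = i mod n}"

definition hom_connected :: "(nat \<Rightarrow> nat \<Rightarrow> bool) \<Rightarrow> (nat \<Rightarrow> nat \<Rightarrow> bool) \<Rightarrow> (nat \<Rightarrow> nat) set \<Rightarrow> bool" where
  "hom_connected A B M \<longleftrightarrow> (\<forall>\<phi>\<in>M. \<forall>\<psi>\<in>M. \<exists>ps. ps \<noteq> [] \<and> hd ps = \<phi> \<and> last ps = \<psi> \<and> set ps \<subseteq> M
      \<and> (\<forall>k. Suc k < length ps \<longrightarrow> hom_arc A B (ps!k) (ps!Suc k) \<or> hom_arc A B (ps!Suc k) (ps!k)))"

definition subpath_set :: "nat \<Rightarrow> nat \<Rightarrow> nat \<Rightarrow> nat set" where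
  "subpath_set m j k = {(j + t) mod m | t. t \<le> k}"

definition one_step_up :: "nat \<Rightarrow> (nat \<Rightarrow> nat \<Rightarrow> bool) \<Rightarrow> nat \<Rightarrow> (nat \<Rightarrow> nat \<Rightarrow> bool) \<Rightarrow> (nat \<Rightarrow> nat) \<Rightarrow> (nat \<Rightarrow> nat) \<Rightarrow> bool" where
  "one_step_up m A n B \<phi> \<psi> \<longleftrightarrow> mono_wind1 m A n B \<phi> \<and> mono_wind1 m A n B \<psi> \<and>
     (\<exists>j<m. \<exists>k<m. (\<forall>t<k. stationary m n \<phi> ((j + t) mod m)) \<and>
        (\<forall>x<m. if x \<in> subpath_set m j k then \<psi> x = Suc (\<phi> x) mod n else \<psi> x = \<phi> x))"

definition up_sequence :: "nat \<Rightarrow> (nat \<Rightarrow> nat \<Rightarrow> bool) \<Rightarrow> nat \<Rightarrow> (nat \<Rightarrow> nat \<Rightarrow> bool) \<Rightarrow> (nat \<Rightarrow> nat) set \<Rightarrow> (nat \<Rightarrow> nat) \<Rightarrow> (nat \<Rightarrow> nat) \<Rightarrow> bool" where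
  "up_sequence m A n B M a b \<longleftrightarrow> (\<exists>ps. ps \<noteq> [] \<and> hd ps = a \<and> last ps = b \<and> set ps \<subseteq> M
      \<and> (\<forall>k. Suc k < length ps \<longrightarrow> one_step_up m A n B (ps!k) (ps!Suc k)))"

end

(*
  Unwinding a monotone wind-1 homomorphism phi along C gives a staircase: a lift
  L : {0..m} -> nat from i mod n to i mod n + n with steps 0 or +1, where an up-step at c_x
  is allowed exactly when the arcs between c_x and c_(x+1) survive it, and phi = L mod n.
  Staircases are closed under pointwise max and min, so there is a greatest and a least one.
  If L <= M are different staircases, raising the flat block of L that starts where L first
  drops below M gives a staircase still below M, and on C this is a monotone one-step up edge.
  Iterating gives up-sequences from the least element of Mon_1(C,D;i) to any phi and from phi
  to the greatest one; connectivity follows because one-step up edges are arcs of Hom(C,D).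
*)

theory Submission
  imports Defs
begin

lemma diff_mod_eq_iff:
  fixes a b c n :: nat
  assumes a: "a < n" and b: "b < n"
  shows "(a + n - b) mod n = c mod n \<longleftrightarrow> a = (b + c) mod n"
proof -
  define r where "r = c mod n"
  have r: "r < n" using a by (simp add: r_def)
  have "(b + c) mod n = (b + r) mod n" by (simp add: r_def mod_add_right_eq)
  also have "\<dots> = (if b + r < n then b + r else b + r - n)"
    using b r by (simp add: mod_if[of "b + r"])
  finally have reduced: "(b + c) mod n = (if b + r < n then b + r else b + r - n)" .
  show ?thesis
  proof (cases "b \<le> a")
    case True
    then have "(a + n - b) mod n = (a - b) mod n" by (metis add_diff_assoc2 mod_add_self2)
    then have "(a + n - b) mod n = a - b" using a by (simp add: less_imp_diff_less)
    then show ?thesis using reduced True a by (auto simp: r_def)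
  next
    case False
    then have "(a + n - b) mod n = a + n - b" using b by simp
    then show ?thesis using reduced False a b r by (auto simp: r_def)
  qed
qed

lemma card_less_Suc_Collect:
  "card {x. x < Suc k \<and> P x} = card {x. x < k \<and> P x} + (if P k then 1 else 0)"
proof -
  have "{x. x < Suc k \<and> P x} = (if P k then insert k {x. x < k \<and> P x} else {x. x < k \<and> P x})"
    by (auto simp: less_Suc_eq)
  then show ?thesis by simp
qed

lemma Sup_fin_in_sup_closed:
  fixes A :: "'a::semilattice_sup set"
  assumes "finite A" "A \<noteq> {}" "A \<subseteq> S" and closed: "\<And>x y. x \<in> S \<Longrightarrow> y \<in> S \<Longrightarrow> sup x y \<in> S"
  shows "Sup_fin A \<in> S"
  using assms(1-3) by (induction A rule: finite_ne_induct) (auto intro: closed)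

lemma Inf_fin_in_inf_closed:
  fixes A :: "'a::semilattice_inf set"
  assumes "finite A" "A \<noteq> {}" "A \<subseteq> S" and closed: "\<And>x y. x \<in> S \<Longrightarrow> y \<in> S \<Longrightarrow> inf x y \<in> S"
  shows "Inf_fin A \<in> S"
  using assms(1-3) by (induction A rule: finite_ne_induct) (auto intro: closed)

lemma rtranclp_map:
  assumes "R\<^sup>*\<^sup>* a b" and "\<And>x y. R x y \<Longrightarrow> S (f x) (f y)"
  shows "S\<^sup>*\<^sup>* (f a) (f b)"
  using assms(1) by (induction rule: rtranclp_induct) (auto intro: rtranclp.rtrancl_into_rtrancl assms(2))

lemma rtranclp_restrict_imp_path:
  assumes "(\<lambda>x y. P x y \<and> x \<in> M \<and> y \<in> M)\<^sup>*\<^sup>* a b" and "a \<in> M"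
  shows "\<exists>ps. ps \<noteq> [] \<and> hd ps = a \<and> last ps = b \<and> set ps \<subseteq> M \<and> successively P ps"
  using assms(1)
proof (induction rule: rtranclp_induct)
  case base
  show ?case using assms(2) by (intro exI[of _ "[a]"]) auto
next
  case (step y z)
  then obtain ps where "ps \<noteq> []" "hd ps = a" "last ps = y" "set ps \<subseteq> M" "successively P ps"
    by blast
  with step.hyps(2) show ?case
    by (intro exI[of _ "ps @ [z]"]) (auto simp: successively_append_iff)
qed

lemma hom_connected_if_common_target:
  assumes "\<And>\<phi>. \<phi> \<in> M \<Longrightarrow>
    (\<lambda>x y. (hom_arc A B x y \<or> hom_arc A B y x) \<and> x \<in> M \<and> y \<in> M)\<^sup>*\<^sup>* \<phi> \<tau>"
  shows "hom_connected A B M"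
  unfolding hom_connected_def
proof (intro ballI)
  let ?adj = "\<lambda>x y. (hom_arc A B x y \<or> hom_arc A B y x) \<and> x \<in> M \<and> y \<in> M"
  fix \<phi> \<psi> assume \<phi>: "\<phi> \<in> M" and \<psi>: "\<psi> \<in> M"
  have "?adj\<^sup>*\<^sup>* \<tau> \<psi>"
    using assms[OF \<psi>] by (induction rule: rtranclp_induct) (auto intro: converse_rtranclp_into_rtranclp)
  with assms[OF \<phi>] have "?adj\<^sup>*\<^sup>* \<phi> \<psi>" by (rule rtranclp_trans)
  from rtranclp_restrict_imp_path[where P = "\<lambda>x y. hom_arc A B x y \<or> hom_arc A B y x", OF this \<phi>]
  show "\<exists>ps. ps \<noteq> [] \<and> hd ps = \<phi> \<and> last ps = \<psi> \<and> set ps \<subseteq> M \<and>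
      (\<forall>k. Suc k < length ps \<longrightarrow> hom_arc A B (ps ! k) (ps ! Suc k) \<or> hom_arc A B (ps ! Suc k) (ps ! k))"
    by (simp add: successively_conv_nth)
qed

section \<open>Staircases\<close>

definition raise_block :: "nat \<Rightarrow> nat \<Rightarrow> (nat \<Rightarrow> nat) \<Rightarrow> nat \<Rightarrow> nat" where
  "raise_block a b L = (\<lambda>z. if a \<le> z \<and> z \<le> b then Suc (L z) else L z)"

locale staircases =
  fixes len :: nat and ascent_ok :: "nat \<Rightarrow> nat \<Rightarrow> bool" and lo hi :: nat
begin

text \<open>Staircases are continued by the constant \<open>hi\<close> beyond \<open>len\<close>, so that they are
  determined by their values on \<open>{..len}\<close> and are compared pointwise.\<close>

definition staircase :: "(nat \<Rightarrow> nat) \<Rightarrow> bool" where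
  "staircase L \<longleftrightarrow> L 0 = lo \<and> (\<forall>x\<ge>len. L x = hi) \<and>
     (\<forall>x<len. L (Suc x) = L x \<or> L (Suc x) = Suc (L x) \<and> ascent_ok x (L x))"

lemma staircase_Suc:
  assumes "staircase L"
  shows "L (Suc x) = L x \<or> L (Suc x) = Suc (L x)"
  using assms unfolding staircase_def by (cases "x < len") auto

lemma staircase_ascent_ok:
  assumes "staircase L" and "L (Suc x) = Suc (L x)"
  shows "ascent_ok x (L x)"
  using assms unfolding staircase_def by (cases "x < len") auto

lemma staircase_mono:
  assumes "staircase L"
  shows "mono L"
  unfolding mono_iff_le_Suc
proof
  fix x
  show "L x \<le> L (Suc x)" using staircase_Suc[OF assms, of x] by linarith
qed

lemma staircase_range:
  assumes "staircase L"
  shows "lo \<le> L x \<and> L x \<le> hi"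
proof -
  have "L 0 \<le> L x" "L x \<le> L (max x len)" by (simp_all add: monoD[OF staircase_mono[OF assms]])
  then show ?thesis using assms unfolding staircase_def by simp
qed

lemma staircase_card_ascents:
  assumes "staircase L"
  shows "card {x. x < k \<and> L (Suc x) = Suc (L x)} = L k - lo"
proof (induction k)
  case 0
  then show ?case using assms unfolding staircase_def by simp
next
  case (Suc k)
  then show ?case
    using staircase_Suc[OF assms, of k] staircase_range[OF assms, of k]
    by (auto simp: card_less_Suc_Collect)
qed

lemma finite_staircases: "finite (Collect staircase)"
proof -
  have "inj_on (\<lambda>L. restrict L {..len}) (Collect staircase)"
  proof (rule inj_onI, rule ext)
    fix L L' x
    assume "L \<in> Collect staircase" "L' \<in> Collect staircase"
      and "restrict L {..len} = restrict L' {..len}"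
    then show "L x = L' x"
      unfolding staircase_def by (cases "x \<le> len") (auto dest: fun_cong[where x = x])
  qed
  moreover have "(\<lambda>L. restrict L {..len}) ` Collect staircase \<subseteq> {..len} \<rightarrow>\<^sub>E {lo..hi}"
    using staircase_range by (intro image_subsetI) (simp add: restrict_PiE_iff)
  ultimately show ?thesis
    by (meson finite_PiE finite_atLeastAtMost finite_atMost finite_imageD finite_subset)
qed

lemma staircase_sup:
  assumes L1: "staircase L1" and L2: "staircase L2"
  shows "staircase (sup L1 L2)"
  unfolding staircase_def
proof (intro conjI allI impI)
  show "sup L1 L2 0 = lo" and "\<And>x. x \<ge> len \<Longrightarrow> sup L1 L2 x = hi"
    using L1 L2 unfolding staircase_def by auto
  fix x
  show "sup L1 L2 (Suc x) = sup L1 L2 x \<or>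
      sup L1 L2 (Suc x) = Suc (sup L1 L2 x) \<and> ascent_ok x (sup L1 L2 x)"
    using staircase_Suc[OF L1, of x] staircase_Suc[OF L2, of x]
      staircase_ascent_ok[OF L1, of x] staircase_ascent_ok[OF L2, of x]
    by (cases "L1 x" "L2 x" rule: linorder_cases) (auto simp: sup_nat_def max_def)
qed

lemma staircase_inf:
  assumes L1: "staircase L1" and L2: "staircase L2"
  shows "staircase (inf L1 L2)"
  unfolding staircase_def
proof (intro conjI allI impI)
  show "inf L1 L2 0 = lo" and "\<And>x. x \<ge> len \<Longrightarrow> inf L1 L2 x = hi"
    using L1 L2 unfolding staircase_def by auto
  fix x
  show "inf L1 L2 (Suc x) = inf L1 L2 x \<or>
      inf L1 L2 (Suc x) = Suc (inf L1 L2 x) \<and> ascent_ok x (inf L1 L2 x)"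
    using staircase_Suc[OF L1, of x] staircase_Suc[OF L2, of x]
      staircase_ascent_ok[OF L1, of x] staircase_ascent_ok[OF L2, of x]
    by (cases "L1 x" "L2 x" rule: linorder_cases) (auto simp: inf_nat_def min_def)
qed

definition top_staircase :: "nat \<Rightarrow> nat" where
  "top_staircase = Sup_fin (Collect staircase)"

definition bot_staircase :: "nat \<Rightarrow> nat" where
  "bot_staircase = Inf_fin (Collect staircase)"

lemma staircase_top_staircase:
  assumes "staircase L"
  shows "staircase top_staircase"
  using Sup_fin_in_sup_closed[OF finite_staircases _ subset_refl] assms staircase_sup
  unfolding top_staircase_def by blast

lemma staircase_bot_staircase:
  assumes "staircase L"
  shows "staircase bot_staircase"
  using Inf_fin_in_inf_closed[OF finite_staircases _ subset_refl] assms staircase_inf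
  unfolding bot_staircase_def by blast

lemma le_top_staircase: "staircase L \<Longrightarrow> L \<le> top_staircase"
  unfolding top_staircase_def by (simp add: Sup_fin.coboundedI finite_staircases)

lemma bot_staircase_le: "staircase L \<Longrightarrow> bot_staircase \<le> L"
  unfolding bot_staircase_def by (simp add: Inf_fin.coboundedI finite_staircases)

definition block_raise :: "(nat \<Rightarrow> nat) \<Rightarrow> (nat \<Rightarrow> nat) \<Rightarrow> bool" where
  "block_raise L L' \<longleftrightarrow> staircase L \<and> staircase L' \<and>
     (\<exists>a b. 0 < a \<and> a \<le> b \<and> b < len \<and> (\<forall>z. a \<le> z \<and> z < b \<longrightarrow> L (Suc z) = L z)
        \<and> L' = raise_block a b L)"

lemma staircase_raise_block:
  assumes L: "staircase L" and ab: "0 < a" "a \<le> b" "b < len"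
    and flat: "L (a - 1) = L b" and up: "L (Suc b) = Suc (L b)"
    and ok: "ascent_ok (a - 1) (L b)"
  shows "staircase (raise_block a b L)"
  unfolding staircase_def
proof (intro conjI allI impI)
  have const: "L z = L b" if "a - 1 \<le> z" "z \<le> b" for z
    using monoD[OF staircase_mono[OF L] that(1)] monoD[OF staircase_mono[OF L] that(2)] flat
    by simp
  show "raise_block a b L 0 = lo" "\<And>x. len \<le> x \<Longrightarrow> raise_block a b L x = hi"
    using L ab unfolding staircase_def raise_block_def by auto
  fix x assume "x < len"
  then have L_step: "L (Suc x) = L x \<or> L (Suc x) = Suc (L x) \<and> ascent_ok x (L x)"
    using L unfolding staircase_def by blast
  consider "Suc x < a \<or> b < x" | "Suc x = a" | "a \<le> x \<and> x < b" | "x = b"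
    by linarith
  then show "raise_block a b L (Suc x) = raise_block a b L x \<or>
      raise_block a b L (Suc x) = Suc (raise_block a b L x) \<and> ascent_ok x (raise_block a b L x)"
  proof cases
    case 1
    then show ?thesis using L_step unfolding raise_block_def by auto
  next
    case 2
    then show ?thesis using const[of x] const[of a] ok ab unfolding raise_block_def by auto
  next
    case 3
    then show ?thesis using const[of x] const[of "Suc x"] unfolding raise_block_def by auto
  next
    case 4
    then show ?thesis using up ab unfolding raise_block_def by auto
  qed
qed

lemma block_raise_less:
  assumes "block_raise L L'"
  shows "\<exists>z<len. L z < L' z" and "L \<le> L'"
  using assms unfolding block_raise_def raise_block_def
  by (fastforce simp: le_fun_def)+

lemma staircase_first_gap:
  assumes L: "staircase L" and M: "staircase M" and "L \<le> M" "L \<noteq> M"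
  obtains x where "0 < x" "x < len" "M (x - 1) = L (x - 1)" "L x = L (x - 1)"
    "M x = Suc (L (x - 1))" "ascent_ok (x - 1) (L (x - 1))"
proof -
  have LM: "L z \<le> M z" for z using \<open>L \<le> M\<close> by (simp add: le_fun_def)
  have "\<exists>x. L x < M x" using assms(3,4) by (metis LM le_neq_implies_less ext)
  define x where "x = (LEAST x. L x < M x)"
  have x: "L x < M x" using LeastI_ex[OF \<open>\<exists>x. L x < M x\<close>] unfolding x_def .
  have "\<not> L (x - 1) < M (x - 1)" if "0 < x"
    using not_less_Least[of "x - 1" "\<lambda>x. L x < M x"] that unfolding x_def by simp
  then have prev: "M (x - 1) = L (x - 1)" if "0 < x" using LM[of "x - 1"] that by simp
  have "x \<noteq> 0" using x L M unfolding staircase_def by (metis less_irrefl)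
  moreover have "x < len"
    using x L M unfolding staircase_def by (cases "x < len") auto
  moreover have "L x = L (x - 1)" "M x = Suc (L (x - 1))"
    using staircase_Suc[OF L, of "x - 1"] staircase_Suc[OF M, of "x - 1"] x prev \<open>x \<noteq> 0\<close>
    by auto
  moreover have "ascent_ok (x - 1) (L (x - 1))"
    using staircase_ascent_ok[OF M, of "x - 1"] calculation(3,4) prev \<open>x \<noteq> 0\<close> by simp
  ultimately show ?thesis using that prev by simp
qed

lemma staircase_flat_end:
  assumes L: "staircase L" and "L x = d" "d < hi"
  obtains y where "x \<le> y" "y < len" "L y = d" "L (Suc y) = Suc d"
proof -
  have L_end: "L z = hi" if "len \<le> z" for z using that L unfolding staircase_def by simp
  then have "{z. L z = d} \<subseteq> {..<len}" using \<open>d < hi\<close> by (auto simp: not_less[symmetric])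
  then have fin: "finite {z. L z = d}" by (rule finite_subset) simp
  define y where "y = Max {z. L z = d}"
  have y: "L y = d" "x \<le> y" using Max_in[OF fin] Max_ge[OF fin] \<open>L x = d\<close> unfolding y_def by auto
  have "y < len" using y(1) L_end[of y] \<open>d < hi\<close> by (cases "y < len") auto
  moreover have "Suc y \<notin> {z. L z = d}" using Max_ge[OF fin, of "Suc y"] unfolding y_def by auto
  then have "L (Suc y) = Suc d" using staircase_Suc[OF L, of y] y by auto
  ultimately show ?thesis using that y by blast
qed

lemma block_raise_towards:
  assumes L: "staircase L" and M: "staircase M" and "L \<le> M" "L \<noteq> M"
  shows "\<exists>L'. block_raise L L' \<and> L' \<le> M"
proof -
  have monoL: "L u \<le> L v" and monoM: "M u \<le> M v" if "u \<le> v" for u v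
    using that staircase_mono[OF L] staircase_mono[OF M] by (simp_all add: monoD)
  obtain x where x: "0 < x" "x < len" "L x = L (x - 1)" "M x = Suc (L (x - 1))"
    and ok: "ascent_ok (x - 1) (L (x - 1))"
    using staircase_first_gap[OF assms] by metis
  define d where "d = L (x - 1)"
  have "d < hi" using x(4) staircase_range[OF M, of x] unfolding d_def by simp
  then obtain y where y: "x \<le> y" "y < len" "L y = d" "L (Suc y) = Suc d"
    using staircase_flat_end[OF L] x(3) unfolding d_def by metis
  have flat: "L (Suc z) = L z" if "x \<le> z" "z < y" for z
    using monoL[of x z] monoL[of z "Suc z"] monoL[of "Suc z" y] that y x(3) unfolding d_def by simp
  have raised: "staircase (raise_block x y L)"
    using staircase_raise_block[OF L x(1) y(1,2)] y(3,4) ok unfolding d_def by simp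
  have "raise_block x y L \<le> M"
  proof (rule le_funI)
    fix z
    show "raise_block x y L z \<le> M z"
    proof (cases "x \<le> z \<and> z \<le> y")
      case True
      then have "L z = d" using monoL[of x z] monoL[of z y] y x(3) unfolding d_def by simp
      then show ?thesis using True monoM[of x z] x(4) unfolding raise_block_def d_def by simp
    qed (use \<open>L \<le> M\<close> in \<open>auto simp: raise_block_def le_fun_def\<close>)
  qed
  then show ?thesis using L raised x(1) y(1,2) flat unfolding block_raise_def by blast
qed

lemma block_raise_path:
  assumes "staircase L" "staircase M" "L \<le> M"
  shows "block_raise\<^sup>*\<^sup>* L M"
  using assms
proof (induction "\<Sum>z<len. M z - L z" arbitrary: L rule: less_induct)
  case less
  show ?case
  proof (cases "L = M")
    case False
    then obtain L' where L': "block_raise L L'" "L' \<le> M"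
      using block_raise_towards less.prems by blast
    have LM: "L' z \<le> M z" for z using L'(2) by (simp add: le_fun_def)
    obtain z where z: "z < len" "L z < L' z" using block_raise_less(1)[OF L'(1)] by blast
    have "(\<Sum>z<len. M z - L' z) < (\<Sum>z<len. M z - L z)"
    proof (rule sum_strict_mono_ex1)
      show "\<forall>x\<in>{..<len}. M x - L' x \<le> M x - L x"
        using block_raise_less(2)[OF L'(1)] by (simp add: le_fun_def diff_le_mono2)
      show "\<exists>x\<in>{..<len}. M x - L' x < M x - L x" using z LM[of z] by (intro bexI[of _ z]) auto
    qed simp
    then have "block_raise\<^sup>*\<^sup>* L' M"
      using less.hyps L' less.prems(2) unfolding block_raise_def by blast
    with L'(1) show ?thesis by (rule converse_rtranclp_into_rtranclp)
  qed simp
qed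

end

section \<open>Monotone wind-1 homomorphisms as staircases\<close>

lemma edge_diff_eq_mod_iff:
  assumes "\<phi> (Suc x mod m) < n" "\<phi> x < n"
  shows "edge_diff m n \<phi> x = c mod n \<longleftrightarrow> \<phi> (Suc x mod m) = (\<phi> x + c) mod n"
  using diff_mod_eq_iff[OF assms] unfolding edge_diff_def .

lemma stationary_iff:
  assumes "\<phi> (Suc x mod m) < n" "\<phi> x < n"
  shows "stationary m n \<phi> x \<longleftrightarrow> \<phi> (Suc x mod m) = \<phi> x"
  using edge_diff_eq_mod_iff[OF assms, of 0] assms(2) unfolding stationary_def by simp

lemma increasing_iff:
  assumes "\<phi> (Suc x mod m) < n" "\<phi> x < n"
  shows "increasing m n \<phi> x \<longleftrightarrow> \<phi> (Suc x mod m) = Suc (\<phi> x) mod n"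
  using edge_diff_eq_mod_iff[OF assms, of 1] unfolding increasing_def by simp

lemma stationary_run_const:
  assumes "0 < m" and less: "\<And>x. x < m \<Longrightarrow> \<phi> x < n"
    and st: "\<And>t. t < k \<Longrightarrow> stationary m n \<phi> ((j + t) mod m)" and "t \<le> k"
  shows "\<phi> ((j + t) mod m) = \<phi> (j mod m)"
  using \<open>t \<le> k\<close>
proof (induction t)
  case (Suc t)
  have "Suc ((j + t) mod m) mod m = (j + Suc t) mod m" by (simp add: mod_Suc_eq)
  then show ?case
    using Suc st[of t] stationary_iff[of \<phi> "(j + t) mod m" m n] less \<open>0 < m\<close> by simp
qed simp

definition ascent_count :: "nat \<Rightarrow> nat \<Rightarrow> (nat \<Rightarrow> nat) \<Rightarrow> nat \<Rightarrow> nat" where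
  "ascent_count m n \<phi> x = card {j. j < x \<and> j < m \<and> increasing m n \<phi> j}"

lemma ascent_count_Suc:
  "ascent_count m n \<phi> (Suc x) =
     (if x < m \<and> increasing m n \<phi> x then Suc (ascent_count m n \<phi> x) else ascent_count m n \<phi> x)"
  unfolding ascent_count_def by (simp add: card_less_Suc_Collect)

lemma not_decreasing_if_monotone:
  assumes "3 \<le> n" "increasing m n \<phi> x \<or> stationary m n \<phi> x"
  shows "\<not> decreasing m n \<phi> x"
  using assms unfolding increasing_def stationary_def decreasing_def by auto

lemma subpath_set_iff:
  assumes "a \<le> b" "b < m" "x < m"
  shows "x \<in> subpath_set m a (b - a) \<longleftrightarrow> a \<le> x \<and> x \<le> b"
proof
  assume "x \<in> subpath_set m a (b - a)"
  then obtain t where "x = (a + t) mod m" "t \<le> b - a" unfolding subpath_set_def by blast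
  then show "a \<le> x \<and> x \<le> b" using assms by simp
next
  assume "a \<le> x \<and> x \<le> b"
  then have "x = (a + (x - a)) mod m" "x - a \<le> b - a" using assms by auto
  then show "x \<in> subpath_set m a (b - a)" unfolding subpath_set_def by blast
qed

definition cycle_ascent_ok ::
    "nat \<Rightarrow> (nat \<Rightarrow> nat \<Rightarrow> bool) \<Rightarrow> nat \<Rightarrow> (nat \<Rightarrow> nat \<Rightarrow> bool) \<Rightarrow> nat \<Rightarrow> nat \<Rightarrow> bool" where
  "cycle_ascent_ok m C n D x v \<longleftrightarrow>
     (C x (Suc x mod m) \<longrightarrow> D (v mod n) (Suc v mod n)) \<and>
     (C (Suc x mod m) x \<longrightarrow> D (Suc v mod n) (v mod n))"

definition wrap :: "nat \<Rightarrow> nat \<Rightarrow> (nat \<Rightarrow> nat) \<Rightarrow> nat \<Rightarrow> nat" where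
  "wrap m n L = restrict (\<lambda>x. L x mod n) {..<m}"

locale refl_cycle_pair =
  fixes m n :: nat and C D :: "nat \<Rightarrow> nat \<Rightarrow> bool" and i :: nat
  assumes C: "refl_cycle m C" and D: "refl_cycle n D"

text \<open>The staircases of this instance are the lifts of the elements of \<open>Mon1 m C n D i\<close>
  to the universal cover of \<open>D\<close>; \<open>wrap\<close> projects them back.\<close>

sublocale refl_cycle_pair \<subseteq> staircases m "cycle_ascent_ok m C n D" "i mod n" "i mod n + n" .

context refl_cycle_pair
begin

lemma m_ge_3: "3 \<le> m" and n_ge_3: "3 \<le> n"
  using C D unfolding refl_cycle_def by auto

lemma C_arcD: "C u v \<Longrightarrow> u < m \<and> v < m \<and> (u = v \<or> v = Suc u mod m \<or> u = Suc v mod m)"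
  using C unfolding refl_cycle_def by blast

lemma D_refl: "u < n \<Longrightarrow> D u u"
  using D unfolding refl_cycle_def by blast

lemma D_edge: "u < n \<Longrightarrow> D u (Suc u mod n) \<or> D (Suc u mod n) u"
  using D unfolding refl_cycle_def by blast

lemma wrap_eq: "x < m \<Longrightarrow> wrap m n L x = L x mod n"
  by (simp add: wrap_def)

lemma wrap_less: "x < m \<Longrightarrow> wrap m n L x < n"
  using n_ge_3 by (simp add: wrap_def)

lemma wrap_Suc:
  assumes "staircase L" "x < m"
  shows "wrap m n L (Suc x mod m) = L (Suc x) mod n"
proof (cases "Suc x < m")
  case False
  then have "Suc x = m" using assms(2) by simp
  then show ?thesis using assms(1) m_ge_3 unfolding staircase_def wrap_def by auto
qed (simp add: wrap_def)

lemma wrap_step_less: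
  assumes "x < m"
  shows "wrap m n L (Suc x mod m) < n" "wrap m n L x < n"
  using assms m_ge_3 by (simp_all add: wrap_less)

lemma increasing_wrap_iff:
  assumes "staircase L" "x < m"
  shows "increasing m n (wrap m n L) x \<longleftrightarrow> L (Suc x) = Suc (L x)"
proof -
  have "increasing m n (wrap m n L) x \<longleftrightarrow>
      wrap m n L (Suc x mod m) = Suc (wrap m n L x) mod n"
    by (rule increasing_iff[OF wrap_step_less[where L = L, OF assms(2)]])
  also have "\<dots> \<longleftrightarrow> L (Suc x) mod n = Suc (L x) mod n"
    using wrap_Suc[OF assms] wrap_eq[OF assms(2)] by (simp add: mod_Suc_eq)
  finally show ?thesis
    using staircase_Suc[OF assms(1), of x] n_ge_3 by (auto simp: mod_Suc split: if_splits)
qed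

lemma stationary_wrap_iff:
  assumes "staircase L" "x < m"
  shows "stationary m n (wrap m n L) x \<longleftrightarrow> L (Suc x) = L x"
proof -
  have "stationary m n (wrap m n L) x \<longleftrightarrow> wrap m n L (Suc x mod m) = wrap m n L x"
    by (rule stationary_iff[OF wrap_step_less[where L = L, OF assms(2)]])
  also have "\<dots> \<longleftrightarrow> L (Suc x) mod n = L x mod n"
    using wrap_Suc[OF assms] wrap_eq[OF assms(2)] by simp
  finally show ?thesis
    using staircase_Suc[OF assms(1), of x] n_ge_3 by (auto simp: mod_Suc split: if_splits)
qed

lemma staircase_wrap_is_hom:
  assumes L: "staircase L"
  shows "is_hom m C n D (wrap m n L)"
  unfolding is_hom_def
proof (intro conjI allI impI)
  show "wrap m n L \<in> {..<m} \<rightarrow>\<^sub>E {..<n}"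
    using n_ge_3 by (simp add: wrap_def restrict_PiE_iff)
  have forward: "D (wrap m n L x) (wrap m n L (Suc x mod m))"
    if "x < m" "C x (Suc x mod m)" for x
  proof -
    have "D (L x mod n) (L (Suc x) mod n)"
      using staircase_Suc[OF L, of x] staircase_ascent_ok[OF L, of x] that(2) D_refl n_ge_3
      unfolding cycle_ascent_ok_def by auto
    then show ?thesis using wrap_Suc[OF L that(1)] wrap_eq[OF that(1)] by simp
  qed
  have backward: "D (wrap m n L (Suc x mod m)) (wrap m n L x)"
    if "x < m" "C (Suc x mod m) x" for x
  proof -
    have "D (L (Suc x) mod n) (L x mod n)"
      using staircase_Suc[OF L, of x] staircase_ascent_ok[OF L, of x] that(2) D_refl n_ge_3
      unfolding cycle_ascent_ok_def by auto
    then show ?thesis using wrap_Suc[OF L that(1)] wrap_eq[OF that(1)] by simp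
  qed
  fix u v assume "C u v"
  then show "D (wrap m n L u) (wrap m n L v)"
    using C_arcD[OF \<open>C u v\<close>] forward[of u] backward[of v] D_refl wrap_less by auto
qed

lemma staircase_wrap_Mon1:
  assumes L: "staircase L"
  shows "wrap m n L \<in> Mon1 m C n D i"
proof -
  have ascents: "{j. j < m \<and> increasing m n (wrap m n L) j} = {j. j < m \<and> L (Suc j) = Suc (L j)}"
    using increasing_wrap_iff[OF L] by blast
  have "card {j. j < m \<and> L (Suc j) = Suc (L j)} = n"
    using staircase_card_ascents[OF L, of m] L unfolding staircase_def by simp
  moreover have monotone: "increasing m n (wrap m n L) j \<or> stationary m n (wrap m n L) j"
    if "j < m" for j
    using increasing_wrap_iff[OF L that] stationary_wrap_iff[OF L that] staircase_Suc[OF L] by blast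
  moreover have "{j. j < m \<and> decreasing m n (wrap m n L) j} = {}"
    using not_decreasing_if_monotone[OF n_ge_3 monotone] by blast
  ultimately have "wind m n (wrap m n L) = 1"
    using n_ge_3 unfolding wind_def ascents by simp
  moreover have "wrap m n L 0 = i mod n"
    using L m_ge_3 by (simp add: wrap_eq staircase_def)
  ultimately show ?thesis
    using staircase_wrap_is_hom[OF L] monotone unfolding Mon1_def mono_wind1_def by blast
qed

lemma Mon1_less:
  assumes "\<phi> \<in> Mon1 m C n D i" "x < m"
  shows "\<phi> x < n"
  using assms unfolding Mon1_def mono_wind1_def is_hom_def by (auto dest: PiE_mem)

lemma Mon1_next:
  assumes \<phi>: "\<phi> \<in> Mon1 m C n D i" and x: "x < m"
  shows "\<phi> (Suc x mod m) = (if increasing m n \<phi> x then Suc (\<phi> x) mod n else \<phi> x)"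
proof -
  have lt: "\<phi> (Suc x mod m) < n" "\<phi> x < n"
    using Mon1_less[OF \<phi>] x m_ge_3 by simp_all
  have "increasing m n \<phi> x \<or> stationary m n \<phi> x"
    using \<phi> x unfolding Mon1_def mono_wind1_def by blast
  then show ?thesis using increasing_iff[OF lt] stationary_iff[OF lt] by auto
qed

lemma Mon1_card_ascents:
  assumes \<phi>: "\<phi> \<in> Mon1 m C n D i"
  shows "card {j. j < m \<and> increasing m n \<phi> j} = n"
proof -
  have no_descents: "{j. j < m \<and> decreasing m n \<phi> j} = {}"
    using \<phi> not_decreasing_if_monotone[OF n_ge_3] unfolding Mon1_def mono_wind1_def by blast
  have "wind m n \<phi> = 1" using \<phi> unfolding Mon1_def mono_wind1_def by blast
  then show ?thesis using n_ge_3 unfolding wind_def no_descents by (simp add: field_simps)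
qed

lemma Mon1_eq_ascent_count:
  assumes \<phi>: "\<phi> \<in> Mon1 m C n D i" and "x < m"
  shows "\<phi> x = (i mod n + ascent_count m n \<phi> x) mod n"
  using \<open>x < m\<close>
proof (induction x)
  case 0
  then show ?case using \<phi> unfolding Mon1_def ascent_count_def by simp
next
  case (Suc x)
  then show ?case using Mon1_next[OF \<phi>, of x] ascent_count_Suc[of m n \<phi> x] by (simp add: mod_Suc_eq)
qed

lemma Mon1_unwrap:
  assumes \<phi>: "\<phi> \<in> Mon1 m C n D i"
  shows "\<exists>L. staircase L \<and> \<phi> = wrap m n L"
proof -
  define L where "L x = i mod n + ascent_count m n \<phi> x" for x
  have phi_eq: "\<phi> x = L x mod n" if "x < m" for x
    using Mon1_eq_ascent_count[OF \<phi> that] unfolding L_def .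
  have L_Suc: "L (Suc x) = (if x < m \<and> increasing m n \<phi> x then Suc (L x) else L x)" for x
    unfolding L_def by (simp add: ascent_count_Suc)
  have L_end: "L x = i mod n + n" if "m \<le> x" for x
  proof -
    have "{j. j < x \<and> j < m \<and> increasing m n \<phi> j} = {j. j < m \<and> increasing m n \<phi> j}"
      using that by auto
    then show ?thesis using Mon1_card_ascents[OF \<phi>] unfolding L_def ascent_count_def by simp
  qed
  have "cycle_ascent_ok m C n D x (L x)" if "x < m" "increasing m n \<phi> x" for x
  proof -
    have "\<phi> (Suc x mod m) = Suc (L x) mod n"
      using Mon1_next[OF \<phi> that(1)] that(2) phi_eq[OF that(1)] by (simp add: mod_Suc_eq)
    moreover have "D (\<phi> u) (\<phi> v)" if "C u v" for u v
      using \<phi> that unfolding Mon1_def mono_wind1_def is_hom_def by blast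
    ultimately show ?thesis
      using phi_eq[OF that(1)] unfolding cycle_ascent_ok_def by metis
  qed
  then have "staircase L"
    unfolding staircase_def using L_Suc L_end by (simp add: L_def ascent_count_def)
  moreover have "\<phi> = wrap m n L"
  proof
    fix x
    show "\<phi> x = wrap m n L x"
    proof (cases "x < m")
      case False
      have "\<phi> \<in> {..<m} \<rightarrow>\<^sub>E {..<n}" using \<phi> unfolding Mon1_def mono_wind1_def is_hom_def by blast
      then show ?thesis using PiE_arb[of \<phi>] False by (simp add: wrap_def)
    qed (simp add: phi_eq wrap_eq)
  qed
  ultimately show ?thesis by blast
qed

lemma block_raise_one_step_up:
  assumes "block_raise L L'"
  shows "one_step_up m C n D (wrap m n L) (wrap m n L')"
proof -
  obtain a b where L: "staircase L" and L': "staircase L'" and ab: "0 < a" "a \<le> b" "b < m"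
    and flat: "\<And>z. a \<le> z \<Longrightarrow> z < b \<Longrightarrow> L (Suc z) = L z" and L'_def: "L' = raise_block a b L"
    using assms unfolding block_raise_def by blast
  have flat_edges: "stationary m n (wrap m n L) ((a + t) mod m)" if "t < b - a" for t
    using that ab flat[of "a + t"] stationary_wrap_iff[OF L, of "a + t"] by simp
  have shifted: "if x \<in> subpath_set m a (b - a) then wrap m n L' x = Suc (wrap m n L x) mod n
      else wrap m n L' x = wrap m n L x" if "x < m" for x
    using that subpath_set_iff[OF ab(2,3) that]
    by (simp add: wrap_eq L'_def raise_block_def mod_Suc_eq)
  show ?thesis
    unfolding one_step_up_def
    using staircase_wrap_Mon1[OF L] staircase_wrap_Mon1[OF L'] ab flat_edges shifted
    unfolding Mon1_def by (intro conjI exI[of _ a] exI[of _ "b - a"]) auto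
qed

lemma hom_arc_if_agree_off:
  assumes "is_hom m C n D \<phi>" "is_hom m C n D \<psi>"
    and "\<And>x. x \<in> S \<Longrightarrow> \<phi> x = d \<and> \<psi> x = d'"
    and "\<And>x. x < m \<Longrightarrow> x \<notin> S \<Longrightarrow> \<psi> x = \<phi> x"
    and "D d d'"
  shows "hom_arc C D \<phi> \<psi>"
  unfolding hom_arc_def
proof (intro allI impI)
  fix u v assume "C u v"
  then have "u < m" "v < m" "D (\<phi> u) (\<phi> v)" "D (\<psi> u) (\<psi> v)"
    using C_arcD assms(1,2) unfolding is_hom_def by auto
  then show "D (\<phi> u) (\<psi> v)"
    using assms(3-5) by (cases "u \<in> S"; cases "v \<in> S") auto
qed

lemma one_step_up_hom_arc:
  assumes "one_step_up m C n D \<phi> \<psi>"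
  shows "hom_arc C D \<phi> \<psi> \<or> hom_arc C D \<psi> \<phi>"
proof -
  obtain j k where "j < m" and st: "\<And>t. t < k \<Longrightarrow> stationary m n \<phi> ((j + t) mod m)"
    and moved: "\<And>x. x < m \<Longrightarrow>
      if x \<in> subpath_set m j k then \<psi> x = Suc (\<phi> x) mod n else \<psi> x = \<phi> x"
    using assms unfolding one_step_up_def by blast
  have hom: "is_hom m C n D \<phi>" "is_hom m C n D \<psi>"
    using assms unfolding one_step_up_def mono_wind1_def by blast+
  have less: "\<phi> x < n" if "x < m" for x
    using hom(1) that unfolding is_hom_def by (auto dest: PiE_mem)
  have const: "\<phi> ((j + t) mod m) = \<phi> j" if "t \<le> k" for t
    using stationary_run_const[of m \<phi> n k j t] less st that m_ge_3 \<open>j < m\<close> by simp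
  define d where "d = \<phi> j"
  have block: "\<phi> x = d \<and> \<psi> x = Suc d mod n" if x: "x \<in> subpath_set m j k" for x
  proof -
    obtain t where "x = (j + t) mod m" "t \<le> k" using x unfolding subpath_set_def by blast
    then show ?thesis using const moved[of x] x m_ge_3 unfolding d_def by auto
  qed
  have off: "\<psi> x = \<phi> x" if "x < m" "x \<notin> subpath_set m j k" for x
    using moved[of x] that by simp
  consider "D d (Suc d mod n)" | "D (Suc d mod n) d"
    using D_edge less[OF \<open>j < m\<close>] unfolding d_def by blast
  then show ?thesis
  proof cases
    case 1
    then show ?thesis using hom_arc_if_agree_off[OF hom block off] by blast
  next
    case 2
    have "hom_arc C D \<psi> \<phi>"
      by (rule hom_arc_if_agree_off[OF hom(2,1), of "subpath_set m j k"]) (use block off 2 in auto)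
    then show ?thesis by blast
  qed
qed

lemma Mon1_extremal_up_paths:
  assumes "Mon1 m C n D i \<noteq> {}"
  shows "\<exists>\<Phi>min\<in>Mon1 m C n D i. \<exists>\<Phi>max\<in>Mon1 m C n D i. \<forall>\<phi>\<in>Mon1 m C n D i.
    (\<lambda>\<phi> \<psi>. one_step_up m C n D \<phi> \<psi> \<and> \<phi> \<in> Mon1 m C n D i \<and> \<psi> \<in> Mon1 m C n D i)\<^sup>*\<^sup>* \<Phi>min \<phi> \<and>
    (\<lambda>\<phi> \<psi>. one_step_up m C n D \<phi> \<psi> \<and> \<phi> \<in> Mon1 m C n D i \<and> \<psi> \<in> Mon1 m C n D i)\<^sup>*\<^sup>* \<phi> \<Phi>max"
proof -
  let ?up = "\<lambda>\<phi> \<psi>. one_step_up m C n D \<phi> \<psi> \<and> \<phi> \<in> Mon1 m C n D i \<and> \<psi> \<in> Mon1 m C n D i"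
  obtain L0 where "staircase L0" using assms Mon1_unwrap by blast
  then have top: "staircase top_staircase" and bot: "staircase bot_staircase"
    by (rule staircase_top_staircase, rule staircase_bot_staircase)
  have lift: "?up\<^sup>*\<^sup>* (wrap m n L) (wrap m n M)" if "block_raise\<^sup>*\<^sup>* L M" for L M
    using that
  proof (rule rtranclp_map)
    fix L L' assume "block_raise L L'"
    then show "?up (wrap m n L) (wrap m n L')"
      using block_raise_one_step_up staircase_wrap_Mon1 unfolding block_raise_def by blast
  qed
  have "?up\<^sup>*\<^sup>* (wrap m n bot_staircase) \<phi> \<and> ?up\<^sup>*\<^sup>* \<phi> (wrap m n top_staircase)"
    if \<phi>: "\<phi> \<in> Mon1 m C n D i" for \<phi>
  proof -
    obtain L where L: "staircase L" and "\<phi> = wrap m n L" using Mon1_unwrap[OF \<phi>] by blast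
    have "block_raise\<^sup>*\<^sup>* bot_staircase L"
      by (rule block_raise_path[OF bot L bot_staircase_le[OF L]])
    moreover have "block_raise\<^sup>*\<^sup>* L top_staircase"
      by (rule block_raise_path[OF L top le_top_staircase[OF L]])
    ultimately show ?thesis using lift \<open>\<phi> = wrap m n L\<close> by blast
  qed
  then show ?thesis using staircase_wrap_Mon1[OF bot] staircase_wrap_Mon1[OF top] by blast
qed

end

theorem fact3p5:
  fixes m n i :: nat and C D :: "nat \<Rightarrow> nat \<Rightarrow> bool"
  assumes "refl_cycle m C" and "refl_cycle n D" and "non_contractible n D"
    and "1 \<le> i" and "i \<le> n"
  shows "hom_connected C D (Mon1 m C n D i) \<and>
    (Mon1 m C n D i \<noteq> {} \<longrightarrow>
      (\<exists>\<Phi>min\<in>Mon1 m C n D i. \<exists>\<Phi>max\<in>Mon1 m C n D i. \<forall>\<phi>\<in>Mon1 m C n D i.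
         up_sequence m C n D (Mon1 m C n D i) \<Phi>min \<phi> \<and>
         up_sequence m C n D (Mon1 m C n D i) \<phi> \<Phi>max))"
proof -
  interpret refl_cycle_pair m n C D i using assms(1,2) by unfold_locales
  let ?M = "Mon1 m C n D i"
  let ?up = "\<lambda>\<phi> \<psi>. one_step_up m C n D \<phi> \<psi> \<and> \<phi> \<in> ?M \<and> \<psi> \<in> ?M"
  let ?adj = "\<lambda>\<phi> \<psi>. (hom_arc C D \<phi> \<psi> \<or> hom_arc C D \<psi> \<phi>) \<and> \<phi> \<in> ?M \<and> \<psi> \<in> ?M"
  show ?thesis
  proof (cases "?M = {}")
    case True
    then show ?thesis by (simp add: hom_connected_def)
  next
    case False
    then obtain \<Phi>min \<Phi>max where "\<Phi>min \<in> ?M" "\<Phi>max \<in> ?M"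
      and paths: "\<And>\<phi>. \<phi> \<in> ?M \<Longrightarrow> ?up\<^sup>*\<^sup>* \<Phi>min \<phi> \<and> ?up\<^sup>*\<^sup>* \<phi> \<Phi>max"
      using Mon1_extremal_up_paths by blast
    have up_adj: "?up a b \<longrightarrow> ?adj a b" for a b using one_step_up_hom_arc by blast
    have "?adj\<^sup>*\<^sup>* \<phi> \<Phi>max" if "\<phi> \<in> ?M" for \<phi>
      using mono_rtranclp[of ?up ?adj, OF up_adj] paths[OF that] by blast
    then have "hom_connected C D ?M" by (rule hom_connected_if_common_target)
    moreover have "up_sequence m C n D ?M \<Phi>min \<phi> \<and> up_sequence m C n D ?M \<phi> \<Phi>max"
      if "\<phi> \<in> ?M" for \<phi>
      using paths rtranclp_restrict_imp_path[of "one_step_up m C n D" ?M] that \<open>\<Phi>min \<in> ?M\<close>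
      unfolding up_sequence_def successively_conv_nth by blast
    ultimately show ?thesis using \<open>\<Phi>min \<in> ?M\<close> \<open>\<Phi>max \<in> ?M\<close> by blast
  qed
qed

end
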